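(* Let $K$ be a field, $R=\bigoplus_{m\ge0}R_m$ an $\mathbb N$-graded $K$-algebra and let $A$ be a graded right double Ore extension of $R$ with generators $x_1,x_2$, relation $x_2x_1=p_{12}x_1x_2+p_{11}x_1^2+\tau_1x_1+\tau_2x_2+\tau_0$, and maps $\sigma=(\sigma_{ij})$, $\delta=(\delta_1,\delta_2)^T$. If $p_{11}=0$, $p_{12}\neq0$, $\sigma_{12}=\sigma_{21}=0$, and $\sigma_{11},\sigma_{22}$ are automorphisms of $R$, then $A$ is a graded skew PBW extension of $R$.
   Context: A $K$-algebra $B\supseteq R$ is a right double Ore extension of $R$ if: it is generated by $R$ and $x_1,x_2$; $x_2x_1=p_{12}x_1x_2+p_{11}x_1^2+\tau_1x_1+\tau_2x_2+\tau_0$ with $p_{12},p_{11}\in K$, $\tau_i\in R$; $B$ is a free left $R$-module with basis $\{x_1^ax_2^b\}_{a,b\ge0}$; and $x_1R+x_2R\subseteq Rx_1+Rx_2+R$. The maps $\sigma_{ij},\delta_i$ are defined by $x_ir=\sigma_{i1}(r)x_1+\sigma_{i2}(r)x_2+\delta_i(r)$. It is graded if all its relations are homogeneous with $\deg x_1=\deg x_2=1$. A ring $A$ is a skew PBW extension of $R$ in $x_1,\dots,x_n$ if $R\subseteq A$; $A$ is a free left $R$-module with basis the monomials $x_1^{\alpha_1}\cdots x_n^{\alpha_n}$; for each $i$ and $r\ne0$ there is $c_{i,r}\ne0$ in $R$ with $x_ir-c_{i,r}x_i\in R$; for all $i,j$ there is $c_{i,j}\in R\setminus\{0\}$ with $x_jx_i-c_{i,j}x_ix_j\in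 R+Rx_1+\cdots+Rx_n$. Then $x_ir=\sigma_i(r)x_i+\delta_i(r)$ with $\sigma_i$ an injective endomorphism and $\delta_i$ a $\sigma_i$-derivation. It is bijective if all $\sigma_i$ are bijective and all $c_{i,j}$ invertible. A graded skew PBW extension is a bijective skew PBW extension of an $\mathbb N$-graded $R$ such that each $\sigma_i$ is graded, $\delta_i(R_m)\subseteq R_{m+1}$, and $x_jx_i-c_{i,j}x_ix_j\in R_2+R_1x_1+\cdots+R_1x_n$ with $c_{i,j}\in R_0$. *)

theory Defs
  imports Main
begin

(* Conventions: the ambient ring A (the extension) is the whole type 'a::ring_1.
   The field K is represented by its (isomorphic) image in A: a central subfield. *)

definition subring :: "'a::ring_1 set \<Rightarrow> bool" where
  "subring S \<longleftrightarrow> 0 \<in> S \<and> 1 \<in> S \<and> (\<forall>a\<in>S. - a \<in> S) \<and>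
     (\<forall>a\<in>S. \<forall>b\<in>S. a + b \<in> S \<and> a * b \<in> S)"

definition central_subfield :: "'a::ring_1 set \<Rightarrow> bool" where
  "central_subfield K \<longleftrightarrow> subring K \<and>
     (\<forall>k\<in>K. k \<noteq> 0 \<longrightarrow> (\<exists>k'\<in>K. k * k' = 1 \<and> k' * k = 1)) \<and>
     (\<forall>k\<in>K. \<forall>a. k * a = a * k)"

definition graded_ring :: "'a::ring_1 set \<Rightarrow> (nat \<Rightarrow> 'a set) \<Rightarrow> bool" where
  "graded_ring R Rg \<longleftrightarrow> subring R \<and>
     (\<forall>m. Rg m \<subseteq> R \<and> 0 \<in> Rg m \<and> (\<forall>a\<in>Rg m. \<forall>b\<in>Rg m. a + b \<in> Rg m \<and> - a \<in> Rg m)) \<and>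
     1 \<in> Rg 0 \<and>
     (\<forall>i j. \<forall>a\<in>Rg i. \<forall>b\<in>Rg j. a * b \<in> Rg (i + j)) \<and>
     (\<forall>r\<in>R. \<exists>!c::nat \<Rightarrow> 'a. (\<forall>m. c m \<in> Rg m) \<and> finite {m. c m \<noteq> 0} \<and>
                r = (\<Sum>m\<in>{m. c m \<noteq> 0}. c m))"

definition graded_K_algebra :: "'a::ring_1 set \<Rightarrow> 'a set \<Rightarrow> (nat \<Rightarrow> 'a set) \<Rightarrow> bool" where
  "graded_K_algebra K R Rg \<longleftrightarrow> K \<subseteq> R \<and> graded_ring R Rg \<and>
     (\<forall>m. \<forall>k\<in>K. \<forall>a\<in>Rg m. k * a \<in> Rg m)"

inductive_set ring_gen :: "'a::ring_1 set \<Rightarrow> 'a set" for S where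
  base: "a \<in> S \<Longrightarrow> a \<in> ring_gen S"
| zero: "0 \<in> ring_gen S"
| one: "1 \<in> ring_gen S"
| neg: "a \<in> ring_gen S \<Longrightarrow> - a \<in> ring_gen S"
| add: "a \<in> ring_gen S \<Longrightarrow> b \<in> ring_gen S \<Longrightarrow> a + b \<in> ring_gen S"
| mult: "a \<in> ring_gen S \<Longrightarrow> b \<in> ring_gen S \<Longrightarrow> a * b \<in> ring_gen S"

definition free_basis2 :: "'a::ring_1 set \<Rightarrow> 'a \<Rightarrow> 'a \<Rightarrow> bool" where
  "free_basis2 R x1 x2 \<longleftrightarrow> (\<forall>u::'a. \<exists>!f::nat \<times> nat \<Rightarrow> 'a.
      (\<forall>ab. f ab \<in> R) \<and> finite {ab. f ab \<noteq> 0} \<and>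
      u = (\<Sum>(a,b)\<in>{ab. f ab \<noteq> 0}. f (a,b) * (x1 ^ a * x2 ^ b)))"

definition right_double_ore ::
  "'a::ring_1 set \<Rightarrow> 'a set \<Rightarrow> 'a \<Rightarrow> 'a \<Rightarrow> 'a \<Rightarrow> 'a \<Rightarrow> 'a \<Rightarrow> 'a \<Rightarrow> 'a \<Rightarrow> bool" where
  "right_double_ore K R x1 x2 p12 p11 t1 t2 t0 \<longleftrightarrow>
     K \<subseteq> R \<and> subring R \<and>
     (\<forall>u. u \<in> ring_gen (R \<union> {x1, x2})) \<and>
     p12 \<in> K \<and> p11 \<in> K \<and> t1 \<in> R \<and> t2 \<in> R \<and> t0 \<in> R \<and>
     x2 * x1 = p12 * x1 * x2 + p11 * x1 ^ 2 + t1 * x1 + t2 * x2 + t0 \<and>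
     free_basis2 R x1 x2 \<and>
     (\<forall>r\<in>R. \<exists>a\<in>R. \<exists>b\<in>R. \<exists>c\<in>R. x1 * r = a * x1 + b * x2 + c) \<and>
     (\<forall>r\<in>R. \<exists>a\<in>R. \<exists>b\<in>R. \<exists>c\<in>R. x2 * r = a * x1 + b * x2 + c)"

definition double_ore_maps ::
  "'a::ring_1 set \<Rightarrow> 'a \<Rightarrow> 'a \<Rightarrow> ('a \<Rightarrow> 'a) \<Rightarrow> ('a \<Rightarrow> 'a) \<Rightarrow> ('a \<Rightarrow> 'a) \<Rightarrow> ('a \<Rightarrow> 'a)
     \<Rightarrow> ('a \<Rightarrow> 'a) \<Rightarrow> ('a \<Rightarrow> 'a) \<Rightarrow> bool" where
  "double_ore_maps R x1 x2 s11 s12 s21 s22 d1 d2 \<longleftrightarrow>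
     (\<forall>r\<in>R. s11 r \<in> R \<and> s12 r \<in> R \<and> s21 r \<in> R \<and> s22 r \<in> R \<and> d1 r \<in> R \<and> d2 r \<in> R \<and>
        x1 * r = s11 r * x1 + s12 r * x2 + d1 r \<and>
        x2 * r = s21 r * x1 + s22 r * x2 + d2 r)"

(* graded right double Ore extension: all relations homogeneous, deg x1 = deg x2 = 1 *)
definition graded_right_double_ore ::
  "'a::ring_1 set \<Rightarrow> 'a set \<Rightarrow> (nat \<Rightarrow> 'a set) \<Rightarrow> 'a \<Rightarrow> 'a \<Rightarrow> 'a \<Rightarrow> 'a \<Rightarrow> 'a \<Rightarrow> 'a \<Rightarrow> 'a
     \<Rightarrow> ('a \<Rightarrow> 'a) \<Rightarrow> ('a \<Rightarrow> 'a) \<Rightarrow> ('a \<Rightarrow> 'a) \<Rightarrow> ('a \<Rightarrow> 'a) \<Rightarrow> ('a \<Rightarrow> 'a) \<Rightarrow> ('a \<Rightarrow> 'a) \<Rightarrow> bool" where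
  "graded_right_double_ore K R Rg x1 x2 p12 p11 t1 t2 t0 s11 s12 s21 s22 d1 d2 \<longleftrightarrow>
     right_double_ore K R x1 x2 p12 p11 t1 t2 t0 \<and>
     double_ore_maps R x1 x2 s11 s12 s21 s22 d1 d2 \<and>
     t1 \<in> Rg 1 \<and> t2 \<in> Rg 1 \<and> t0 \<in> Rg 2 \<and>
     (\<forall>m. \<forall>r\<in>Rg m. s11 r \<in> Rg m \<and> s12 r \<in> Rg m \<and> s21 r \<in> Rg m \<and> s22 r \<in> Rg m \<and>
                    d1 r \<in> Rg (Suc m) \<and> d2 r \<in> Rg (Suc m))"

definition ring_automorphism :: "'a::ring_1 set \<Rightarrow> ('a \<Rightarrow> 'a) \<Rightarrow> bool" where
  "ring_automorphism R f \<longleftrightarrow> bij_betw f R R \<and> f 1 = 1 \<and>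
     (\<forall>a\<in>R. \<forall>b\<in>R. f (a + b) = f a + f b \<and> f (a * b) = f a * f b)"

definition exps :: "nat \<Rightarrow> (nat \<Rightarrow> nat) set" where
  "exps n = {\<alpha>. \<forall>i. i \<notin> {1..n} \<longrightarrow> \<alpha> i = 0}"

definition monom :: "nat \<Rightarrow> (nat \<Rightarrow> 'a::ring_1) \<Rightarrow> (nat \<Rightarrow> nat) \<Rightarrow> 'a" where
  "monom n x \<alpha> = prod_list (map (\<lambda>i. x i ^ \<alpha> i) [1..<Suc n])"

definition free_monomial_basis :: "'a::ring_1 set \<Rightarrow> nat \<Rightarrow> (nat \<Rightarrow> 'a) \<Rightarrow> bool" where
  "free_monomial_basis R n x \<longleftrightarrow> (\<forall>u::'a. \<exists>!f::(nat \<Rightarrow> nat) \<Rightarrow> 'a.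
      (\<forall>\<alpha>. f \<alpha> \<in> R) \<and> (\<forall>\<alpha>. \<alpha> \<notin> exps n \<longrightarrow> f \<alpha> = 0) \<and> finite {\<alpha>. f \<alpha> \<noteq> 0} \<and>
      u = (\<Sum>\<alpha>\<in>{\<alpha>. f \<alpha> \<noteq> 0}. f \<alpha> * monom n x \<alpha>))"

definition lin_span :: "'a::ring_1 set \<Rightarrow> 'a set \<Rightarrow> nat \<Rightarrow> (nat \<Rightarrow> 'a) \<Rightarrow> 'a set" where
  "lin_span S0 S1 n x = {r0 + (\<Sum>k=1..n. r k * x k) | r0 r. r0 \<in> S0 \<and> (\<forall>k. r k \<in> S1)}"

definition skew_PBW :: "'a::ring_1 set \<Rightarrow> nat \<Rightarrow> (nat \<Rightarrow> 'a) \<Rightarrow> bool" where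
  "skew_PBW R n x \<longleftrightarrow> subring R \<and> free_monomial_basis R n x \<and>
     (\<forall>i\<in>{1..n}. \<forall>r\<in>R. r \<noteq> 0 \<longrightarrow> (\<exists>c\<in>R. c \<noteq> 0 \<and> x i * r - c * x i \<in> R)) \<and>
     (\<forall>i\<in>{1..n}. \<forall>j\<in>{1..n}. \<exists>c\<in>R. c \<noteq> 0 \<and> x j * x i - c * x i * x j \<in> lin_span R R n x)"

definition unit_in :: "'a::ring_1 set \<Rightarrow> 'a \<Rightarrow> bool" where
  "unit_in R c \<longleftrightarrow> (\<exists>c'\<in>R. c * c' = 1 \<and> c' * c = 1)"

(* sigma_i, delta_i are the (unique, by freeness) maps with x_i r = sigma_i(r) x_i + delta_i(r);
   c_{i,j} is unique by freeness as well, so existential quantification is faithful *)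
definition bijective_skew_PBW :: "'a::ring_1 set \<Rightarrow> nat \<Rightarrow> (nat \<Rightarrow> 'a) \<Rightarrow> bool" where
  "bijective_skew_PBW R n x \<longleftrightarrow> skew_PBW R n x \<and>
     (\<forall>i\<in>{1..n}. \<exists>\<sigma> \<delta>. (\<forall>r\<in>R. \<sigma> r \<in> R \<and> \<delta> r \<in> R \<and> x i * r = \<sigma> r * x i + \<delta> r) \<and>
                         bij_betw \<sigma> R R) \<and>
     (\<forall>i\<in>{1..n}. \<forall>j\<in>{1..n}. \<exists>c\<in>R. c \<noteq> 0 \<and> unit_in R c \<and>
                         x j * x i - c * x i * x j \<in> lin_span R R n x)"

definition graded_skew_PBW :: "'a::ring_1 set \<Rightarrow> (nat \<Rightarrow> 'a set) \<Rightarrow> nat \<Rightarrow> (nat \<Rightarrow> 'a) \<Rightarrow> bool" where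
  "graded_skew_PBW R Rg n x \<longleftrightarrow> bijective_skew_PBW R n x \<and> graded_ring R Rg \<and>
     (\<forall>i\<in>{1..n}. \<exists>\<sigma> \<delta>. (\<forall>r\<in>R. \<sigma> r \<in> R \<and> \<delta> r \<in> R \<and> x i * r = \<sigma> r * x i + \<delta> r) \<and>
          (\<forall>m. \<forall>r\<in>Rg m. \<sigma> r \<in> Rg m \<and> \<delta> r \<in> Rg (Suc m))) \<and>
     (\<forall>i\<in>{1..n}. \<forall>j\<in>{1..n}. \<exists>c\<in>Rg 0. c \<noteq> 0 \<and> unit_in R c \<and>
          x j * x i - c * x i * x j \<in> lin_span (Rg 2) (Rg 1) n x)"

end

theory Submission
  imports Defs
begin

(* With sigma_12 = sigma_21 = 0 the defining relations of the double Ore extension read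
   x_i r = sigma_ii(r) x_i + delta_i(r), i.e. each generator is a graded Ore variable over R with
   automorphism sigma_ii. Since p_11 = 0 and p_12 is a nonzero, hence invertible, scalar, the
   relation x_2 x_1 = p_12 x_1 x_2 + tau_1 x_1 + tau_2 x_2 + tau_0 can be solved for x_1 x_2 as
   well, which gives both commutation relations with homogeneous lower-order terms. The free
   basis x_1^a x_2^b is the monomial basis of the skew PBW extension up to the identification of
   exponent pairs with exponent vectors supported in {1, 2}. *)

definition exps_of_pair :: "nat \<times> nat \<Rightarrow> (nat \<Rightarrow> nat)" where
  "exps_of_pair ab = (\<lambda>i. if i = 1 then fst ab else if i = 2 then snd ab else 0)"

definition coeffs_of_pairs :: "(nat \<times> nat \<Rightarrow> 'a::zero) \<Rightarrow> (nat \<Rightarrow> nat) \<Rightarrow> 'a" where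
  "coeffs_of_pairs f = (\<lambda>\<alpha>. if \<alpha> \<in> exps 2 then f (\<alpha> 1, \<alpha> 2) else 0)"

lemma inj_exps_of_pair: "inj exps_of_pair"
proof (rule injI)
  fix u v assume "exps_of_pair u = exps_of_pair v"
  then have "exps_of_pair u 1 = exps_of_pair v 1" "exps_of_pair u 2 = exps_of_pair v 2" by auto
  then show "u = v" by (simp add: exps_of_pair_def prod_eq_iff)
qed

lemma exps_of_pair_in_exps: "exps_of_pair ab \<in> exps 2"
  by (auto simp: exps_of_pair_def exps_def)

lemma exps_of_pair_components: "\<alpha> \<in> exps 2 \<Longrightarrow> exps_of_pair (\<alpha> 1, \<alpha> 2) = \<alpha>"
  unfolding exps_of_pair_def exps_def by (rule ext) auto

lemma coeffs_of_pairs_exps_of_pair [simp]: "coeffs_of_pairs f (exps_of_pair ab) = f ab"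
  using exps_of_pair_in_exps[of ab] by (simp add: coeffs_of_pairs_def exps_of_pair_def)

lemma coeffs_of_pairs_comp_exps_of_pair:
  assumes "\<forall>\<alpha>. \<alpha> \<notin> exps 2 \<longrightarrow> g \<alpha> = 0"
  shows "coeffs_of_pairs (g \<circ> exps_of_pair) = g"
  using assms exps_of_pair_components by (auto simp: coeffs_of_pairs_def)

lemma monom_2: "monom 2 x \<alpha> = x 1 ^ \<alpha> 1 * x 2 ^ \<alpha> 2"
  by (simp add: monom_def numeral_2_eq_2 upt_rec)

lemma bij_betw_exps_of_pair_support:
  assumes "\<forall>\<alpha>. \<alpha> \<notin> exps 2 \<longrightarrow> g \<alpha> = 0"
  shows "bij_betw exps_of_pair {ab. g (exps_of_pair ab) \<noteq> 0} {\<alpha>. g \<alpha> \<noteq> 0}"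
proof (rule bij_betw_imageI)
  show "inj_on exps_of_pair {ab. g (exps_of_pair ab) \<noteq> 0}"
    using inj_exps_of_pair by (rule inj_on_subset) simp
  show "exps_of_pair ` {ab. g (exps_of_pair ab) \<noteq> 0} = {\<alpha>. g \<alpha> \<noteq> 0}"
  proof (intro equalityI subsetI)
    fix \<alpha> assume "\<alpha> \<in> {\<alpha>. g \<alpha> \<noteq> 0}"
    moreover from this have "exps_of_pair (\<alpha> 1, \<alpha> 2) = \<alpha>"
      using assms exps_of_pair_components by blast
    ultimately show "\<alpha> \<in> exps_of_pair ` {ab. g (exps_of_pair ab) \<noteq> 0}"
      by (metis (mono_tags, lifting) image_eqI mem_Collect_eq)
  qed auto
qed

lemma monomial_repr_iff_pair_repr:
  fixes g :: "(nat \<Rightarrow> nat) \<Rightarrow> 'a::ring_1"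
  assumes "0 \<in> R" and g: "\<forall>\<alpha>. \<alpha> \<notin> exps 2 \<longrightarrow> g \<alpha> = 0"
  shows "((\<forall>\<alpha>. g \<alpha> \<in> R) \<and> finite {\<alpha>. g \<alpha> \<noteq> 0} \<and>
            u = (\<Sum>\<alpha>\<in>{\<alpha>. g \<alpha> \<noteq> 0}. g \<alpha> * monom 2 x \<alpha>))
    \<longleftrightarrow> ((\<forall>ab. g (exps_of_pair ab) \<in> R) \<and> finite {ab. g (exps_of_pair ab) \<noteq> 0} \<and>
            u = (\<Sum>(a,b)\<in>{ab. g (exps_of_pair ab) \<noteq> 0}. g (exps_of_pair (a,b)) * (x 1 ^ a * x 2 ^ b)))"
proof -
  have bij: "bij_betw exps_of_pair {ab. g (exps_of_pair ab) \<noteq> 0} {\<alpha>. g \<alpha> \<noteq> 0}"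
    using g by (rule bij_betw_exps_of_pair_support)
  have "(\<forall>\<alpha>. g \<alpha> \<in> R) \<longleftrightarrow> (\<forall>ab. g (exps_of_pair ab) \<in> R)"
    using assms exps_of_pair_components by metis
  moreover have "(\<Sum>\<alpha>\<in>{\<alpha>. g \<alpha> \<noteq> 0}. g \<alpha> * monom 2 x \<alpha>)
      = (\<Sum>(a,b)\<in>{ab. g (exps_of_pair ab) \<noteq> 0}. g (exps_of_pair (a,b)) * (x 1 ^ a * x 2 ^ b))"
    unfolding sum.reindex_bij_betw[OF bij, symmetric]
    by (rule sum.cong) (auto simp: monom_2 exps_of_pair_def)
  ultimately show ?thesis
    using bij_betw_finite[OF bij] by simp
qed

lemma free_monomial_basis_2I:
  assumes fb: "free_basis2 R x1 x2" and "0 \<in> R"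
  shows "free_monomial_basis R 2 (\<lambda>i. if i = 1 then x1 else x2)"
  unfolding free_monomial_basis_def
proof
  fix u
  let ?x = "\<lambda>i::nat. if i = 1 then x1 else x2"
  let ?pair_repr = "\<lambda>f. (\<forall>ab. f ab \<in> R) \<and> finite {ab. f ab \<noteq> 0} \<and>
      u = (\<Sum>(a,b)\<in>{ab. f ab \<noteq> 0}. f (a,b) * (x1 ^ a * x2 ^ b))"
  let ?repr = "\<lambda>g. (\<forall>\<alpha>. g \<alpha> \<in> R) \<and> finite {\<alpha>. g \<alpha> \<noteq> 0} \<and>
      u = (\<Sum>\<alpha>\<in>{\<alpha>. g \<alpha> \<noteq> 0}. g \<alpha> * monom 2 ?x \<alpha>)"
  have repr_iff: "?repr g \<longleftrightarrow> ?pair_repr (g \<circ> exps_of_pair)"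
    if "\<forall>\<alpha>. \<alpha> \<notin> exps 2 \<longrightarrow> g \<alpha> = 0" for g
    using monomial_repr_iff_pair_repr[OF \<open>0 \<in> R\<close> that, of u ?x] by (simp add: split_def)
  from fb have "\<exists>!f. ?pair_repr f"
    unfolding free_basis2_def by blast
  then obtain f where f: "?pair_repr f" and f_unique: "\<And>f'. ?pair_repr f' \<Longrightarrow> f' = f"
    by (elim ex1E) blast
  have supp: "\<forall>\<alpha>. \<alpha> \<notin> exps 2 \<longrightarrow> coeffs_of_pairs f \<alpha> = 0"
    by (simp add: coeffs_of_pairs_def)
  have "?pair_repr (coeffs_of_pairs f \<circ> exps_of_pair)"
    using f by (simp add: comp_def)
  then have "?repr (coeffs_of_pairs f)"
    using repr_iff[OF supp] by blast
  have "\<exists>!g. (\<forall>\<alpha>. \<alpha> \<notin> exps 2 \<longrightarrow> g \<alpha> = 0) \<and> ?repr g"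
  proof (rule ex1I[of _ "coeffs_of_pairs f"])
    show "(\<forall>\<alpha>. \<alpha> \<notin> exps 2 \<longrightarrow> coeffs_of_pairs f \<alpha> = 0) \<and> ?repr (coeffs_of_pairs f)"
      using \<open>?repr (coeffs_of_pairs f)\<close> supp by blast
  next
    fix g assume g: "(\<forall>\<alpha>. \<alpha> \<notin> exps 2 \<longrightarrow> g \<alpha> = 0) \<and> ?repr g"
    then have "?pair_repr (g \<circ> exps_of_pair)"
      using repr_iff by blast
    then have "g \<circ> exps_of_pair = f"
      by (rule f_unique)
    then show "g = coeffs_of_pairs f"
      using coeffs_of_pairs_comp_exps_of_pair g by metis
  qed
  then show "\<exists>!g. (\<forall>\<alpha>. g \<alpha> \<in> R) \<and> (\<forall>\<alpha>. \<alpha> \<notin> exps 2 \<longrightarrow> g \<alpha> = 0) \<and> finite {\<alpha>. g \<alpha> \<noteq> 0} \<and>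
      u = (\<Sum>\<alpha>\<in>{\<alpha>. g \<alpha> \<noteq> 0}. g \<alpha> * monom 2 ?x \<alpha>)"
    by (simp only: conj_left_commute)
qed

lemma lin_span_2I:
  assumes "r0 \<in> S0" "a \<in> S1" "b \<in> S1" "0 \<in> S1"
  shows "r0 + a * x1 + b * x2 \<in> lin_span S0 S1 2 (\<lambda>i. if i = 1 then x1 else x2)"
  unfolding lin_span_def
proof (intro CollectI exI conjI)
  let ?r = "\<lambda>k::nat. if k = 1 then a else if k = 2 then b else 0"
  show "r0 + a * x1 + b * x2 = r0 + (\<Sum>k=1..2. ?r k * (if k = 1 then x1 else x2))"
    by (simp add: numeral_2_eq_2 add.assoc)
  show "r0 \<in> S0" by fact
  show "\<forall>k. ?r k \<in> S1" using assms by auto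
qed

lemma lin_span_mono: "S0 \<subseteq> T0 \<Longrightarrow> S1 \<subseteq> T1 \<Longrightarrow> lin_span S0 S1 n x \<subseteq> lin_span T0 T1 n x"
  unfolding lin_span_def by blast

lemma graded_K_algebra_scalars_degree_0:
  assumes "graded_K_algebra K R Rg"
  shows "K \<subseteq> Rg 0"
  using assms unfolding graded_K_algebra_def graded_ring_def by (metis mult_1_right subsetI)

lemma ring_automorphism_nonzero:
  assumes "ring_automorphism R f" "0 \<in> R" "r \<in> R" "r \<noteq> 0"
  shows "f r \<noteq> 0"
proof -
  have "f 0 = 0"
    using assms(1,2) unfolding ring_automorphism_def by (metis add.right_neutral add_left_cancel)
  then show ?thesis
    using assms unfolding ring_automorphism_def bij_betw_def inj_on_def by metis
qed

lemma graded_skew_PBWI: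
  fixes x :: "nat \<Rightarrow> 'a::ring_1" and \<sigma> \<delta> :: "nat \<Rightarrow> 'a \<Rightarrow> 'a"
  assumes graded: "graded_ring R Rg" and basis: "free_monomial_basis R n x"
    and aut: "\<And>i. i \<in> {1..n} \<Longrightarrow> ring_automorphism R (\<sigma> i)"
    and ore: "\<And>i r. i \<in> {1..n} \<Longrightarrow> r \<in> R \<Longrightarrow> \<delta> i r \<in> R \<and> x i * r = \<sigma> i r * x i + \<delta> i r"
    and deg: "\<And>i m r. i \<in> {1..n} \<Longrightarrow> r \<in> Rg m \<Longrightarrow> \<sigma> i r \<in> Rg m \<and> \<delta> i r \<in> Rg (Suc m)"
    and rel: "\<And>i j. i \<in> {1..n} \<Longrightarrow> j \<in> {1..n} \<Longrightarrow> \<exists>c\<in>Rg 0. c \<noteq> 0 \<and> unit_in R c \<and>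
                x j * x i - c * x i * x j \<in> lin_span (Rg 2) (Rg 1) n x"
  shows "graded_skew_PBW R Rg n x"
proof -
  have subring: "subring R" and Rg_R: "\<And>m. Rg m \<subseteq> R"
    using graded unfolding graded_ring_def by auto
  then have "0 \<in> R" unfolding subring_def by blast
  have \<sigma>_R: "\<sigma> i r \<in> R" and bij: "bij_betw (\<sigma> i) R R" if "i \<in> {1..n}" "r \<in> R" for i r
    using aut[OF that(1)] that(2) unfolding ring_automorphism_def bij_betw_def by auto
  have ore_R: "\<forall>r\<in>R. \<sigma> i r \<in> R \<and> \<delta> i r \<in> R \<and> x i * r = \<sigma> i r * x i + \<delta> i r"
    if "i \<in> {1..n}" for i
    using that \<sigma>_R ore by blast
  have nonzero: "\<forall>i\<in>{1..n}. \<forall>r\<in>R. r \<noteq> 0 \<longrightarrow> (\<exists>c\<in>R. c \<noteq> 0 \<and> x i * r - c * x i \<in> R)"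
  proof (intro ballI impI)
    fix i r assume "i \<in> {1..n}" "r \<in> R" "r \<noteq> 0"
    then show "\<exists>c\<in>R. c \<noteq> 0 \<and> x i * r - c * x i \<in> R"
      using ore \<sigma>_R ring_automorphism_nonzero[OF aut \<open>0 \<in> R\<close>] by (intro bexI[of _ "\<sigma> i r"]) auto
  qed
  have rel_R: "\<forall>i\<in>{1..n}. \<forall>j\<in>{1..n}. \<exists>c\<in>R. c \<noteq> 0 \<and> unit_in R c \<and>
      x j * x i - c * x i * x j \<in> lin_span R R n x"
  proof (intro ballI)
    fix i j assume "i \<in> {1..n}" "j \<in> {1..n}"
    then obtain c where "c \<in> Rg 0" "c \<noteq> 0" "unit_in R c"
      and "x j * x i - c * x i * x j \<in> lin_span (Rg 2) (Rg 1) n x"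
      using rel by blast
    moreover have "lin_span (Rg 2) (Rg 1) n x \<subseteq> lin_span R R n x"
      by (rule lin_span_mono[OF Rg_R Rg_R])
    ultimately show "\<exists>c\<in>R. c \<noteq> 0 \<and> unit_in R c \<and> x j * x i - c * x i * x j \<in> lin_span R R n x"
      using Rg_R by blast
  qed
  show ?thesis
    unfolding graded_skew_PBW_def bijective_skew_PBW_def skew_PBW_def
  proof (intro conjI ballI)
    show "\<exists>\<sigma>' \<delta>'. (\<forall>r\<in>R. \<sigma>' r \<in> R \<and> \<delta>' r \<in> R \<and> x i * r = \<sigma>' r * x i + \<delta>' r) \<and>
        bij_betw \<sigma>' R R" if "i \<in> {1..n}" for i
      using ore_R[OF that] bij[OF that] by blast
    show "\<exists>\<sigma>' \<delta>'. (\<forall>r\<in>R. \<sigma>' r \<in> R \<and> \<delta>' r \<in> R \<and> x i * r = \<sigma>' r * x i + \<delta>' r) \<and>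
        (\<forall>m. \<forall>r\<in>Rg m. \<sigma>' r \<in> Rg m \<and> \<delta>' r \<in> Rg (Suc m))" if "i \<in> {1..n}" for i
      using ore_R[OF that] deg[OF that] by blast
  qed (use subring basis nonzero rel_R graded rel in blast)+
qed

lemma swap_quadratic_relation:
  fixes x1 x2 :: "'a::ring_1"
  assumes "x2 * x1 = p * x1 * x2 + t1 * x1 + t2 * x2 + t0" and "q * p = 1"
  shows "x1 * x2 - q * x2 * x1 = - (q * t0) + - (q * t1) * x1 + - (q * t2) * x2"
proof -
  have "q * x2 * x1 = (q * p) * x1 * x2 + q * t1 * x1 + q * t2 * x2 + q * t0"
    by (simp add: mult.assoc assms(1) distrib_left)
  then show ?thesis
    using assms(2) by (simp add: algebra_simps)
qed

lemma graded_two_generator_commutators: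
  fixes x1 x2 :: "'a::ring_1"
  assumes graded: "graded_ring R Rg"
    and rel: "x2 * x1 = p * x1 * x2 + t1 * x1 + t2 * x2 + t0"
    and t: "t1 \<in> Rg 1" "t2 \<in> Rg 1" "t0 \<in> Rg 2"
    and p: "p \<in> Rg 0" "q \<in> Rg 0" "p * q = 1" "q * p = 1" "p \<noteq> 0"
    and ij: "i \<in> {1..2}" "j \<in> {1..2}"
  defines "x \<equiv> \<lambda>i::nat. if i = 1 then x1 else x2"
  shows "\<exists>c\<in>Rg 0. c \<noteq> 0 \<and> unit_in R c \<and> x j * x i - c * x i * x j \<in> lin_span (Rg 2) (Rg 1) 2 x"
proof -
  have Rg_R: "\<And>m. Rg m \<subseteq> R" and Rg_0: "\<And>m. 0 \<in> Rg m" and Rg_uminus: "\<And>m a. a \<in> Rg m \<Longrightarrow> - a \<in> Rg m"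
    and Rg_mult: "\<And>i j a b. a \<in> Rg i \<Longrightarrow> b \<in> Rg j \<Longrightarrow> a * b \<in> Rg (i + j)"
    and "1 \<in> Rg 0"
    using graded unfolding graded_ring_def by auto
  have "(1::'a) \<noteq> 0" using \<open>p \<noteq> 0\<close> by (metis mult_1_right mult_zero_right)
  then have "q \<noteq> 0" using \<open>p * q = 1\<close> by auto
  have units: "unit_in R 1" "unit_in R p" "unit_in R q"
    unfolding unit_in_def using p Rg_R[of 0] \<open>1 \<in> Rg 0\<close> by auto
  have q_t: "- (q * t0) \<in> Rg 2" "- (q * t1) \<in> Rg 1" "- (q * t2) \<in> Rg 1"
    using Rg_uminus Rg_mult[OF \<open>q \<in> Rg 0\<close>] t by (metis add_0)+
  consider "i = j" | "i = 1" "j = 2" | "i = 2" "j = 1" using ij by force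
  then show ?thesis
  proof cases
    case 1
    then show ?thesis using lin_span_2I[of 0 "Rg 2" 0 "Rg 1" 0 x1 x2] Rg_0 units \<open>1 \<in> Rg 0\<close> \<open>(1::'a) \<noteq> 0\<close>
      by (intro bexI[of _ 1]) (auto simp: x_def)
  next
    case 2
    have "x2 * x1 - p * x1 * x2 = t0 + t1 * x1 + t2 * x2" using rel by (simp add: algebra_simps)
    then show ?thesis using 2 lin_span_2I[OF t(3,1,2) Rg_0, of x1 x2] p units
      by (auto simp: x_def)
  next
    case 3
    show ?thesis using 3 swap_quadratic_relation[OF rel \<open>q * p = 1\<close>] lin_span_2I[OF q_t Rg_0, of x1 x2]
        p units \<open>q \<noteq> 0\<close> by (auto simp: x_def)
  qed
qed

theorem theorem3p5:
  fixes K R :: "'a::ring_1 set" and Rg :: "nat \<Rightarrow> 'a set"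
    and x1 x2 p12 p11 t1 t2 t0 :: 'a
    and s11 s12 s21 s22 d1 d2 :: "'a \<Rightarrow> 'a"
  assumes "central_subfield K"
    and "graded_K_algebra K R Rg"
    and "graded_right_double_ore K R Rg x1 x2 p12 p11 t1 t2 t0 s11 s12 s21 s22 d1 d2"
    and "p11 = 0" and "p12 \<noteq> 0"
    and "\<forall>r\<in>R. s12 r = 0" and "\<forall>r\<in>R. s21 r = 0"
    and "ring_automorphism R s11" and "ring_automorphism R s22"
  shows "graded_skew_PBW R Rg 2 (\<lambda>i. if i = 1 then x1 else x2)"
proof -
  have graded: "graded_ring R Rg" using assms(2) unfolding graded_K_algebra_def by blast
  then have "0 \<in> R" unfolding graded_ring_def subring_def by blast
  note K_Rg_0 = graded_K_algebra_scalars_degree_0[OF assms(2)]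
  from assms(3,4) have ore: "right_double_ore K R x1 x2 p12 0 t1 t2 t0"
    and maps: "double_ore_maps R x1 x2 s11 s12 s21 s22 d1 d2"
    and t: "t1 \<in> Rg 1" "t2 \<in> Rg 1" "t0 \<in> Rg 2"
    and deg: "\<forall>m. \<forall>r\<in>Rg m. s11 r \<in> Rg m \<and> s22 r \<in> Rg m \<and> d1 r \<in> Rg (Suc m) \<and> d2 r \<in> Rg (Suc m)"
    unfolding graded_right_double_ore_def by auto
  then have "p12 \<in> K" and rel: "x2 * x1 = p12 * x1 * x2 + t1 * x1 + t2 * x2 + t0"
    and basis: "free_basis2 R x1 x2"
    unfolding right_double_ore_def by auto
  with assms(1,5) obtain q where "q \<in> K" "p12 * q = 1" "q * p12 = 1"
    unfolding central_subfield_def by blast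
  show ?thesis
  proof (rule graded_skew_PBWI[OF graded free_monomial_basis_2I[OF basis \<open>0 \<in> R\<close>],
        where \<sigma> = "\<lambda>i. if i = 1 then s11 else s22" and \<delta> = "\<lambda>i. if i = 1 then d1 else d2"])
    show "ring_automorphism R (if i = 1 then s11 else s22)" for i :: nat
      using assms(8,9) by simp
    show "(if i = 1 then d1 else d2) r \<in> R \<and> (if i = 1 then x1 else x2) * r =
        (if i = 1 then s11 else s22) r * (if i = 1 then x1 else x2) + (if i = 1 then d1 else d2) r"
      if "i \<in> {1..2}" "r \<in> R" for i :: nat and r
      using maps assms(6,7) that unfolding double_ore_maps_def by auto
    show "(if i = 1 then s11 else s22) r \<in> Rg m \<and> (if i = 1 then d1 else d2) r \<in> Rg (Suc m)"
      if "r \<in> Rg m" for i :: nat and m r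
      using deg that by simp
  qed (use graded_two_generator_commutators[OF graded rel t] K_Rg_0 \<open>p12 \<in> K\<close> \<open>q \<in> K\<close>
         \<open>p12 * q = 1\<close> \<open>q * p12 = 1\<close> assms(5) in blast)
qed

end
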